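(* Fix $\omega\in\{0,\infty\}$ and a network (finite directed multigraph with edge set $\mathcal E$, OD pairs $\mathcal I$, pairwise disjoint nonempty finite path sets $\mathcal P^i$) with nondecreasing edge functions $g_e:[0,\infty)\to[0,\infty)$, $g_e(0)=0$. Let $g:(0,\infty)\to(0,\infty)$ be $\rho$-regularly varying at $\omega$ with $\rho>0$ (i.e. $\lim_{t\to\omega}g(tx)/g(t)=x^\rho$ for all $x>0$) and such that $\alpha_e=\lim_{x\to\omega}g_e(x)/g(x)\in[0,\infty]$ exists for all $e$. Let $\alpha_p=\max_{e\in p}\alpha_e$ and $\alpha^i=\min_{p\in\mathcal P^i}\alpha_p$. Let $m_n=M_n\lambda_n$ be inflow vectors with $M_n>0$, $\lambda_n\in\Delta(\mathcal I)$, such that: (a) $M_n\to\omega$ and $\lambda_n\to\lambda\in\Delta(\mathcal I)$; (b) every OD pair has a path $p$ with $\alpha_p<\infty$; (c) there is $i\in\mathcal I$ with $0<\alpha^i<\infty$ and $\lambda^i>0$. Let $G_n=\min_{y\in\mathcal Y}\sum_{e\in\mathcal E}g_e(x_e(y,m_n))$. Then $\lim_{n\to\infty}G_n/g(M_n)=V_\rho(\lambda)$, where $V_\rho(\lambda)=\min_{y\in\mathcal Y}\sum_{e\in\mathcal E}\alpha_e\,\zeta_e(y,\lambda)^\rho\in(0,\infty)$ with the convention $\alpha_e\zeta_e^\rho=0$ when $\alpha_e=\infty$ and $\zeta_e=0$. Moreover, if $\bar y_n$ is a sequence of optimal solutions for $G_n$, every limit point of $(\bar y_n)$ is optimal fo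r $V_\rho(\lambda)$.
   Context: $\Delta(\mathcal I)$ is the probability simplex on $\mathcal I$. A normalized traffic allocation is $y=(y^i)_{i\in\mathcal I}$ with $y^i\in\Delta(\mathcal P^i)$ (nonnegative, summing to $1$); $\mathcal Y=\prod_i\Delta(\mathcal P^i)$. For $e\in\mathcal E$, $z_e^i(y)=\sum_{p\in\mathcal P^i,\,p\ni e}y^i_p$, $\zeta_e(y,\lambda)=\sum_i\lambda^iz_e^i(y)$, and for an inflow vector $m=M\lambda$, $x_e(y,m)=M\zeta_e(y,\lambda)=\sum_i m^iz^i_e(y)$. *)

theory Defs
  imports "HOL-Analysis.Analysis"
begin

definition is_path :: "('e \<Rightarrow> 'v) \<Rightarrow> ('e \<Rightarrow> 'v) \<Rightarrow> 'v \<Rightarrow> 'v \<Rightarrow> 'e list \<Rightarrow> bool" where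
  "is_path tail head u w p \<longleftrightarrow>
     p \<noteq> [] \<and> tail (hd p) = u \<and> head (last p) = w \<and>
     (\<forall>k. Suc k < length p \<longrightarrow> head (p ! k) = tail (p ! Suc k)) \<and>
     distinct (map tail p @ [head (last p)])"

definition prob_simplex :: "'a set \<Rightarrow> ('a \<Rightarrow> real) set" where
  "prob_simplex A = {v. (\<forall>a\<in>A. 0 \<le> v a) \<and> (\<forall>a. a \<notin> A \<longrightarrow> v a = 0) \<and> sum v A = 1}"

definition allocs :: "('i \<Rightarrow> 'p set) \<Rightarrow> ('i \<Rightarrow> 'p \<Rightarrow> real) set" where
  "allocs P = {y. \<forall>i. y i \<in> prob_simplex (P i)}"

definition zflow :: "('i \<Rightarrow> 'e list set) \<Rightarrow> ('i \<Rightarrow> 'e list \<Rightarrow> real) \<Rightarrow> 'e \<Rightarrow> 'i \<Rightarrow> real" where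
  "zflow P y e i = (\<Sum>p\<in>{p\<in>P i. e \<in> set p}. y i p)"

definition zeta :: "('i::finite \<Rightarrow> 'e list set) \<Rightarrow> ('i \<Rightarrow> 'e list \<Rightarrow> real) \<Rightarrow> ('i \<Rightarrow> real) \<Rightarrow> 'e \<Rightarrow> real" where
  "zeta P y lam e = (\<Sum>i\<in>UNIV. lam i * zflow P y e i)"

definition xflow :: "('i::finite \<Rightarrow> 'e list set) \<Rightarrow> ('i \<Rightarrow> 'e list \<Rightarrow> real) \<Rightarrow> ('i \<Rightarrow> real) \<Rightarrow> 'e \<Rightarrow> real" where
  "xflow P y m e = (\<Sum>i\<in>UNIV. m i * zflow P y e i)"

definition cost :: "('i::finite \<Rightarrow> 'e list set) \<Rightarrow> ('e::finite \<Rightarrow> real \<Rightarrow> real) \<Rightarrow> ('i \<Rightarrow> real)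
    \<Rightarrow> ('i \<Rightarrow> 'e list \<Rightarrow> real) \<Rightarrow> real" where
  "cost P ge m y = (\<Sum>e\<in>UNIV. ge e (xflow P y m e))"

definition Gopt :: "('i::finite \<Rightarrow> 'e list set) \<Rightarrow> ('e::finite \<Rightarrow> real \<Rightarrow> real) \<Rightarrow> ('i \<Rightarrow> real) \<Rightarrow> real" where
  "Gopt P ge m = (INF y\<in>allocs P. cost P ge m y)"

text \<open>One term alpha_e * zeta_e^rho, with the convention that it is 0 whenever zeta_e = 0
  (in particular when alpha_e = \<infinity>).\<close>
definition limterm :: "ereal \<Rightarrow> real \<Rightarrow> real \<Rightarrow> ereal" where
  "limterm a z \<rho> = (if z = 0 then 0 else a * ereal (z powr \<rho>))"

definition Vobj :: "('i::finite \<Rightarrow> 'e list set) \<Rightarrow> ('e::finite \<Rightarrow> ereal) \<Rightarrow> real \<Rightarrow> ('i \<Rightarrow> real)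
    \<Rightarrow> ('i \<Rightarrow> 'e list \<Rightarrow> real) \<Rightarrow> ereal" where
  "Vobj P \<alpha> \<rho> lam y = (\<Sum>e\<in>UNIV. limterm (\<alpha> e) (zeta P y lam e) \<rho>)"

definition Vrho :: "('i::finite \<Rightarrow> 'e list set) \<Rightarrow> ('e::finite \<Rightarrow> ereal) \<Rightarrow> real \<Rightarrow> ('i \<Rightarrow> real) \<Rightarrow> ereal" where
  "Vrho P \<alpha> \<rho> lam = (INF y\<in>allocs P. Vobj P \<alpha> \<rho> lam y)"

definition omega_filter :: "ereal \<Rightarrow> real filter" where
  "omega_filter \<omega> = (if \<omega> = \<infinity> then at_top else at_right 0)"

definition alpha_path :: "('e \<Rightarrow> ereal) \<Rightarrow> 'e list \<Rightarrow> ereal" where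
  "alpha_path \<alpha> p = Max (\<alpha> ` set p)"

definition alpha_od :: "('i \<Rightarrow> 'e list set) \<Rightarrow> ('e \<Rightarrow> ereal) \<Rightarrow> 'i \<Rightarrow> ereal" where
  "alpha_od P \<alpha> i = Min (alpha_path \<alpha> ` P i)"

end

theory Submission
  imports Defs
begin

text \<open>After normalization by \<open>g (M n)\<close>, the cost of an allocation \<open>y\<close> is a sum of edge
  terms \<open>g\<^sub>e (M n * \<zeta>\<^sub>e) / g (M n)\<close>. Regular variation turns \<open>g\<^sub>e (M n * d) / g (M n)\<close>
  into \<open>\<alpha>\<^sub>e d\<^sup>\<rho>\<close> at every fixed scale \<open>d\<close>, and monotonicity of \<open>g\<^sub>e\<close> lets the scale
  vary with \<open>n\<close>. Evaluating a fixed allocation, after moving the OD pairs of zero limit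
  demand off the edges with \<open>\<alpha>\<^sub>e = \<infinity>\<close>, gives \<open>limsup G\<^sub>n / g (M\<^sub>n) \<le> V\<^sub>\<rho>(\<lambda>)\<close>.
  Conversely, along any subsequence on which the optimal allocations converge to \<open>y\<close>,
  the edge terms are eventually above their limits, so the liminf is at least
  \<open>Vobj y \<ge> V\<^sub>\<rho>(\<lambda>)\<close>; compactness of the allocations reaches every subsequence. The same
  lower bound shows that limit points of optimal allocations are optimal.\<close>

section \<open>Limits of sums and of rescaled edge costs\<close>

lemma limsup_sum_le:
  fixes u :: "'a \<Rightarrow> nat \<Rightarrow> ereal"
  assumes "finite A"
  shows "limsup (\<lambda>n. \<Sum>a\<in>A. u a n) \<le> (\<Sum>a\<in>A. limsup (u a))"
  using assms
proof (induction A rule: finite_induct)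
  case empty
  then show ?case by (simp add: Limsup_const)
next
  case (insert a A)
  have "limsup (\<lambda>n. \<Sum>x\<in>insert a A. u x n) = limsup (\<lambda>n. u a n + (\<Sum>x\<in>A. u x n))"
    using insert.hyps by simp
  also have "\<dots> \<le> limsup (u a) + limsup (\<lambda>n. \<Sum>x\<in>A. u x n)"
    by (rule ereal_limsup_add_mono)
  also have "\<dots> \<le> limsup (u a) + (\<Sum>x\<in>A. limsup (u x))"
    using insert.IH by (rule add_left_mono)
  finally show ?case
    using insert.hyps by simp
qed

lemma liminf_sum_ge:
  fixes u :: "'a \<Rightarrow> nat \<Rightarrow> ereal"
  assumes "finite A" and nonneg: "\<And>a n. a \<in> A \<Longrightarrow> 0 \<le> u a n"
  shows "(\<Sum>a\<in>A. liminf (u a)) \<le> liminf (\<lambda>n. \<Sum>a\<in>A. u a n)"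
  using assms
proof (induction A rule: finite_induct)
  case empty
  then show ?case by (simp add: Liminf_const)
next
  case (insert a A)
  have "(\<Sum>x\<in>insert a A. liminf (u x)) \<le> liminf (u a) + liminf (\<lambda>n. \<Sum>x\<in>A. u x n)"
    using insert by (simp add: add_left_mono)
  also have "\<dots> \<le> liminf (\<lambda>n. u a n + (\<Sum>x\<in>A. u x n))"
    using insert.prems by (intro Liminf_add_le) (auto intro!: always_eventually sum_nonneg)
  finally show ?case
    using insert.hyps by simp
qed

text \<open>The next two lemmas bound one edge term \<open>h (N k * z k) / g (N k)\<close> when
  \<open>h (N k * d) / g (N k) \<rightarrow> a * d powr \<rho>\<close> for every scale \<open>d > 0\<close>: by monotonicity
  of \<open>h\<close> the term is sandwiched between the values at fixed scales \<open>d\<close> slightly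
  below and above \<open>lim z\<close>, and then \<open>d\<close> tends to \<open>lim z\<close>.\<close>

lemma limterm_le_liminf_scaled:
  fixes N z :: "nat \<Rightarrow> real" and h g :: "real \<Rightarrow> real" and a :: ereal
  assumes lim: "\<And>d. 0 < d \<Longrightarrow> ((\<lambda>k. ereal (h (N k * d) / g (N k))) \<longlongrightarrow> a * ereal (d powr \<rho>)) sequentially"
    and z: "z \<longlonglongrightarrow> z0" and z_nonneg: "\<And>k. 0 \<le> z k"
    and N_pos: "\<And>k. 0 < N k" and g_pos: "\<And>k. 0 < g (N k)"
    and mono: "mono_on {0..} h" and h_nonneg: "\<And>x. 0 \<le> x \<Longrightarrow> 0 \<le> h x"
    and "0 \<le> a" and "0 < \<rho>"
  shows "limterm a z0 \<rho> \<le> liminf (\<lambda>k. ereal (h (N k * z k) / g (N k)))"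
proof (cases "z0 = 0")
  case True
  have "\<And>k. 0 \<le> ereal (h (N k * z k) / g (N k))"
    using h_nonneg N_pos z_nonneg g_pos by (simp add: less_imp_le)
  then show ?thesis
    using True by (simp add: limterm_def Liminf_bounded)
next
  case False
  have "0 \<le> z0"
    using z z_nonneg by (intro LIMSEQ_le_const) auto
  with False have z0_pos: "0 < z0" by simp
  have below: "a * ereal (d powr \<rho>) \<le> liminf (\<lambda>k. ereal (h (N k * z k) / g (N k)))"
    if d: "0 < d" "d < z0" for d
  proof -
    have "eventually (\<lambda>k. d < z k) sequentially"
      using z d(2) by (rule order_tendstoD)
    then have "eventually (\<lambda>k. ereal (h (N k * d) / g (N k)) \<le> ereal (h (N k * z k) / g (N k))) sequentially"
    proof eventually_elim
      case (elim k)
      have "h (N k * d) \<le> h (N k * z k)"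
        using N_pos[of k] d elim by (intro mono_onD[OF mono]) auto
      then show ?case
        using g_pos by (simp add: divide_right_mono less_imp_le)
    qed
    then have "liminf (\<lambda>k. ereal (h (N k * d) / g (N k))) \<le> liminf (\<lambda>k. ereal (h (N k * z k) / g (N k)))"
      by (rule Liminf_mono)
    then show ?thesis
      using lim_imp_Liminf[OF _ lim[OF d(1)]] by simp
  qed
  have "((\<lambda>d. a * ereal (d powr \<rho>)) \<longlongrightarrow> a * ereal (z0 powr \<rho>)) (at_left z0)"
    using z0_pos by (intro tendsto_mult_ereal tendsto_const) (auto intro!: tendsto_intros)
  moreover have "eventually (\<lambda>d. 0 < d \<and> d < z0) (at_left z0)"
    using z0_pos by (auto simp: eventually_at_left_field intro!: exI[of _ 0])
  ultimately have "a * ereal (z0 powr \<rho>) \<le> liminf (\<lambda>k. ereal (h (N k * z k) / g (N k)))"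
    by (intro tendsto_upperbound) (auto elim!: eventually_mono intro: below)
  then show ?thesis
    using False by (simp add: limterm_def)
qed

lemma limsup_scaled_le:
  fixes N z :: "nat \<Rightarrow> real" and h g :: "real \<Rightarrow> real" and r :: real
  assumes lim: "\<And>d. 0 < d \<Longrightarrow> ((\<lambda>k. h (N k * d) / g (N k)) \<longlongrightarrow> r * d powr \<rho>) sequentially"
    and z: "z \<longlonglongrightarrow> z0" and z_nonneg: "\<And>k. 0 \<le> z k"
    and N_pos: "\<And>k. 0 < N k" and g_pos: "\<And>k. 0 < g (N k)"
    and mono: "mono_on {0..} h" and "0 < \<rho>"
  shows "limsup (\<lambda>k. ereal (h (N k * z k) / g (N k))) \<le> ereal (r * z0 powr \<rho>)"
proof -
  have z0: "0 \<le> z0"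
    using z z_nonneg by (intro LIMSEQ_le_const) auto
  have above: "limsup (\<lambda>k. ereal (h (N k * z k) / g (N k))) \<le> ereal (r * d powr \<rho>)"
    if d: "z0 < d" for d
  proof -
    have "eventually (\<lambda>k. z k < d) sequentially"
      using z d by (rule order_tendstoD)
    then have "eventually (\<lambda>k. ereal (h (N k * z k) / g (N k)) \<le> ereal (h (N k * d) / g (N k))) sequentially"
    proof eventually_elim
      case (elim k)
      have "h (N k * z k) \<le> h (N k * d)"
        using N_pos[of k] z_nonneg[of k] elim by (intro mono_onD[OF mono]) auto
      then show ?case
        using g_pos by (simp add: divide_right_mono less_imp_le)
    qed
    then have "limsup (\<lambda>k. ereal (h (N k * z k) / g (N k))) \<le> limsup (\<lambda>k. ereal (h (N k * d) / g (N k)))"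
      by (rule Limsup_mono)
    moreover have "((\<lambda>k. ereal (h (N k * d) / g (N k))) \<longlongrightarrow> ereal (r * d powr \<rho>)) sequentially"
      using lim z0 d by simp
    ultimately show ?thesis
      by (simp add: lim_imp_Limsup)
  qed
  have "((\<lambda>d. ereal (r * d powr \<rho>)) \<longlongrightarrow> ereal (r * z0 powr \<rho>)) (at_right z0)"
    using \<open>0 < \<rho>\<close> z0
    by (intro tendsto_intros tendsto_powr')
      (auto simp: eventually_at_right_field intro!: exI[of _ "z0 + 1"])
  then show ?thesis
    by (rule tendsto_lowerbound) (auto intro: eventually_mono[OF eventually_at_right_less] above)
qed


lemma filterlim_omega_filter_scale:
  assumes omega: "\<omega> = 0 \<or> \<omega> = \<infinity>" and M: "filterlim M (omega_filter \<omega>) F"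
    and M_pos: "\<And>n. 0 < M n" and c: "0 < (c::real)"
  shows "filterlim (\<lambda>n. M n * c) (omega_filter \<omega>) F"
  using omega
proof
  assume "\<omega> = \<infinity>"
  with M have "filterlim M at_top F"
    by (simp add: omega_filter_def)
  then have "filterlim (\<lambda>n. c * M n) at_top F"
    by (rule filterlim_tendsto_pos_mult_at_top[OF tendsto_const c])
  then show ?thesis
    using \<open>\<omega> = \<infinity>\<close> by (simp add: omega_filter_def mult.commute)
next
  assume "\<omega> = 0"
  with M have "(M \<longlongrightarrow> 0) F"
    by (simp add: omega_filter_def filterlim_at)
  then have "((\<lambda>n. M n * c) \<longlongrightarrow> 0) F"
    by (rule tendsto_mult_left_zero)
  moreover have "eventually (\<lambda>n. M n * c \<in> {0<..} \<and> M n * c \<noteq> 0) F"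
    using M_pos c by (intro always_eventually) (simp add: order_less_imp_not_eq2)
  ultimately show ?thesis
    using \<open>\<omega> = 0\<close> by (simp add: omega_filter_def filterlim_at)
qed

text \<open>Regular variation transports the edge limit \<open>h / g \<rightarrow> a\<close> to every scale:
  \<open>h (M n * c) / g (M n) = (h / g) (M n * c) \<cdot> g (M n * c) / g (M n)\<close>.\<close>

lemma scaled_ratio_tendsto:
  assumes omega: "\<omega> = 0 \<or> \<omega> = \<infinity>" and M: "filterlim M (omega_filter \<omega>) sequentially"
    and M_pos: "\<And>n. 0 < M n" and g_pos: "\<And>x. 0 < x \<Longrightarrow> 0 < g x"
    and regvar: "((\<lambda>t. g (t * c) / g t) \<longlongrightarrow> c powr \<rho>) (omega_filter \<omega>)"
    and lim: "((\<lambda>x. ereal (h x / g x)) \<longlongrightarrow> a) (omega_filter \<omega>)" and c: "0 < c"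
  shows "((\<lambda>n. ereal (h (M n * c) / g (M n))) \<longlongrightarrow> a * ereal (c powr \<rho>)) sequentially"
proof -
  have "((\<lambda>n. ereal (h (M n * c) / g (M n * c))) \<longlongrightarrow> a) sequentially"
    using filterlim_compose[OF lim filterlim_omega_filter_scale[OF omega M M_pos c]] by simp
  moreover have "((\<lambda>n. ereal (g (M n * c) / g (M n))) \<longlongrightarrow> ereal (c powr \<rho>)) sequentially"
    using filterlim_compose[OF regvar M] by simp
  ultimately have "((\<lambda>n. ereal (h (M n * c) / g (M n * c)) * ereal (g (M n * c) / g (M n)))
      \<longlongrightarrow> a * ereal (c powr \<rho>)) sequentially"
    using c by (intro tendsto_mult_ereal) auto
  moreover have "ereal (h (M n * c) / g (M n * c)) * ereal (g (M n * c) / g (M n))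
      = ereal (h (M n * c) / g (M n))" for n
    using g_pos[of "M n"] g_pos[of "M n * c"] M_pos[of n] c by simp
  ultimately show ?thesis
    by (simp only:)
qed

section \<open>Allocations and flows\<close>

lemma allocs_nonneg: "y \<in> allocs P \<Longrightarrow> 0 \<le> y i p"
  by (cases "p \<in> P i") (auto simp: allocs_def prob_simplex_def)

lemma allocs_le_one:
  assumes "y \<in> allocs P" and "finite (P i)"
  shows "y i p \<le> 1"
proof (cases "p \<in> P i")
  case True
  then have "y i p \<le> sum (y i) (P i)"
    using assms by (intro member_le_sum) (auto simp: allocs_nonneg)
  then show ?thesis
    using assms(1) by (simp add: allocs_def prob_simplex_def)
next
  case False
  then show ?thesis
    using assms(1) by (simp add: allocs_def prob_simplex_def)
qed

lemma allocs_closed: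
  assumes fin: "\<And>i. finite (P i)" and u: "\<And>k. u k \<in> allocs P"
    and conv: "\<And>i p. (\<lambda>k. u k i p) \<longlonglongrightarrow> y i p"
  shows "y \<in> allocs P"
  unfolding allocs_def prob_simplex_def
proof (intro CollectI allI conjI ballI impI)
  fix i p
  have ui: "\<And>k. u k i \<in> prob_simplex (P i)"
    using u by (auto simp: allocs_def)
  show "0 \<le> y i p"
    using conv[of i p] by (rule LIMSEQ_le_const) (auto intro: allocs_nonneg[OF u])
  show "y i p = 0" if "p \<notin> P i"
    using conv[of i p] ui that by (simp add: prob_simplex_def LIMSEQ_const_iff)
  have "(\<lambda>k. \<Sum>p\<in>P i. u k i p) \<longlonglongrightarrow> (\<Sum>p\<in>P i. y i p)"
    using conv by (intro tendsto_sum) auto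
  then show "sum (y i) (P i) = 1"
    using ui by (simp add: prob_simplex_def LIMSEQ_const_iff)
qed

lemma bounded_seqs_common_convergent_subseq:
  fixes u :: "nat \<Rightarrow> 'a \<Rightarrow> real"
  assumes "finite S" and bounded: "\<And>n x. \<bar>u n x\<bar> \<le> C"
  shows "\<exists>\<phi> l. strict_mono \<phi> \<and> (\<forall>x\<in>S. (\<lambda>k. u (\<phi> k) x) \<longlonglongrightarrow> l x)"
  using assms(1)
proof (induction S rule: finite_induct)
  case empty
  show ?case
    using strict_mono_id by blast
next
  case (insert x S)
  then obtain \<phi> l where \<phi>: "strict_mono \<phi>" and conv: "\<forall>x\<in>S. (\<lambda>k. u (\<phi> k) x) \<longlonglongrightarrow> l x"
    by blast
  have "bounded (range (\<lambda>k. u (\<phi> k) x))"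
    using bounded by (intro boundedI[where B=C]) auto
  then obtain l0 \<psi> where \<psi>: "strict_mono \<psi>" and conv0: "((\<lambda>k. u (\<phi> k) x) \<circ> \<psi>) \<longlonglongrightarrow> l0"
    using bounded_imp_convergent_subsequence by blast
  have "(\<lambda>k. u ((\<phi> \<circ> \<psi>) k) x') \<longlonglongrightarrow> (l(x := l0)) x'" if "x' \<in> insert x S" for x'
  proof (cases "x' = x")
    case True
    then show ?thesis
      using conv0 by (simp add: o_def)
  next
    case False
    then have "((\<lambda>k. u (\<phi> k) x') \<circ> \<psi>) \<longlonglongrightarrow> l x'"
      using conv that \<psi> by (intro LIMSEQ_subseq_LIMSEQ) auto
    then show ?thesis
      using False by (simp add: o_def)
  qed
  then show ?case
    using strict_mono_o[OF \<phi> \<psi>] by blast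
qed

lemma allocs_convergent_subseq:
  fixes u :: "nat \<Rightarrow> 'i::finite \<Rightarrow> 'p \<Rightarrow> real"
  assumes fin: "\<And>i. finite (P i)" and u: "\<And>n. u n \<in> allocs P"
  shows "\<exists>\<phi> y. strict_mono \<phi> \<and> (\<forall>i p. (\<lambda>k. u (\<phi> k) i p) \<longlonglongrightarrow> y i p)"
proof -
  have bounded: "\<bar>u n (fst x) (snd x)\<bar> \<le> 1" for n x
    using allocs_nonneg[OF u] allocs_le_one[OF u fin] by simp
  have "finite (Sigma UNIV P)"
    using fin by simp
  from bounded_seqs_common_convergent_subseq[OF this, of "\<lambda>n x. u n (fst x) (snd x)", OF bounded]
  obtain \<phi> l where \<phi>: "strict_mono \<phi>"
    and conv: "\<forall>x\<in>Sigma UNIV P. (\<lambda>k. u (\<phi> k) (fst x) (snd x)) \<longlonglongrightarrow> l x"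
    by blast
  have "(\<lambda>k. u (\<phi> k) i p) \<longlonglongrightarrow> (if p \<in> P i then l (i, p) else 0)" for i p
  proof (cases "p \<in> P i")
    case True
    then show ?thesis
      using conv by auto
  next
    case False
    then have "\<And>n. u n i p = 0"
      using u by (auto simp: allocs_def prob_simplex_def)
    then show ?thesis
      using False by simp
  qed
  then show ?thesis
    using \<phi> by (intro exI[of _ \<phi>] exI[of _ "\<lambda>i p. if p \<in> P i then l (i, p) else 0"]) simp
qed

lemma exists_path_share_ge_inverse_card:
  assumes "y \<in> allocs P" and "finite (P i)" and "P i \<noteq> {}"
  shows "\<exists>p\<in>P i. 1 / real (card (P i)) \<le> y i p"
proof (rule ccontr)
  assume "\<not> ?thesis"
  then have "sum (y i) (P i) < (\<Sum>p\<in>P i. 1 / real (card (P i)))"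
    using assms(2,3) by (intro sum_strict_mono) auto
  also have "\<dots> = 1"
    using assms(2,3) by simp
  finally show False
    using assms(1) by (simp add: allocs_def prob_simplex_def)
qed

lemma zflow_nonneg: "y \<in> allocs P \<Longrightarrow> 0 \<le> zflow P y e i"
  unfolding zflow_def by (auto intro!: sum_nonneg simp: allocs_nonneg)

lemma zeta_nonneg: "y \<in> allocs P \<Longrightarrow> (\<And>i. 0 \<le> lam i) \<Longrightarrow> 0 \<le> zeta P y lam e"
  unfolding zeta_def by (auto intro!: sum_nonneg simp: zflow_nonneg)

lemma tendsto_zeta:
  assumes "\<And>i p. (\<lambda>k. u k i p) \<longlonglongrightarrow> y i p" and "\<And>i. (\<lambda>k. lam k i) \<longlonglongrightarrow> lam0 i"
  shows "(\<lambda>k. zeta P (u k) (lam k) e) \<longlonglongrightarrow> zeta P y lam0 e"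
  unfolding zeta_def zflow_def using assms by (intro tendsto_sum tendsto_mult) auto

lemma xflow_scale: "xflow P y (\<lambda>i. M * lam i) e = M * zeta P y lam e"
  unfolding xflow_def zeta_def by (simp add: sum_distrib_left mult.assoc)

lemma alpha_le_alpha_path: "e \<in> set p \<Longrightarrow> \<alpha> e \<le> alpha_path \<alpha> p"
  by (simp add: alpha_path_def)

lemma alpha_path_attained:
  assumes "p \<noteq> []"
  shows "\<exists>e\<in>set p. \<alpha> e = alpha_path \<alpha> p"
proof -
  have "alpha_path \<alpha> p \<in> \<alpha> ` set p"
    unfolding alpha_path_def using assms by (intro Max_in) auto
  then show ?thesis
    by auto
qed

section \<open>The limit of the normalized optimal cost\<close>

text \<open>The hypotheses on \<open>\<omega>\<close>, \<open>g\<close> and the edge limits enter only through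
  \<open>scaled_lim\<close>, the limit of the normalized edge cost at each fixed scale.\<close>

locale asymptotic_routing =
  fixes P :: "'i::finite \<Rightarrow> 'e::finite list set"
    and ge :: "'e \<Rightarrow> real \<Rightarrow> real"
    and g :: "real \<Rightarrow> real"
    and \<rho> :: real
    and \<alpha> :: "'e \<Rightarrow> ereal"
    and M :: "nat \<Rightarrow> real"
    and lam :: "nat \<Rightarrow> 'i \<Rightarrow> real"
    and lam0 :: "'i \<Rightarrow> real"
    and ybar :: "nat \<Rightarrow> 'i \<Rightarrow> 'e list \<Rightarrow> real"
  assumes P_fin: "\<And>i. finite (P i)"
    and P_ne: "\<And>i. P i \<noteq> {}"
    and path_ne: "\<And>i p. p \<in> P i \<Longrightarrow> p \<noteq> []"
    and ge_mono: "\<And>e. mono_on {0..} (ge e)"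
    and ge_nonneg: "\<And>e x. 0 \<le> x \<Longrightarrow> 0 \<le> ge e x"
    and ge_zero: "\<And>e. ge e 0 = 0"
    and rho_pos: "0 < \<rho>"
    and M_pos: "\<And>n. 0 < M n"
    and gM_pos: "\<And>n. 0 < g (M n)"
    and scaled_lim: "\<And>e d. 0 < d \<Longrightarrow>
      ((\<lambda>n. ereal (ge e (M n * d) / g (M n))) \<longlongrightarrow> \<alpha> e * ereal (d powr \<rho>)) sequentially"
    and lam_simplex: "\<And>n. lam n \<in> prob_simplex UNIV"
    and lam_lim: "\<And>i. (\<lambda>n. lam n i) \<longlonglongrightarrow> lam0 i"
    and lam0_simplex: "lam0 \<in> prob_simplex UNIV"
    and finite_path: "\<And>i. \<exists>p\<in>P i. alpha_path \<alpha> p < \<infinity>"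
    and ybar_allocs: "\<And>n. ybar n \<in> allocs P"
    and ybar_opt: "\<And>n. cost P ge (\<lambda>i. M n * lam n i) (ybar n) = Gopt P ge (\<lambda>i. M n * lam n i)"
begin

definition ncost :: "nat \<Rightarrow> ('i \<Rightarrow> 'e list \<Rightarrow> real) \<Rightarrow> ereal" where
  "ncost n y = ereal (cost P ge (\<lambda>i. M n * lam n i) y / g (M n))"

definition Gnorm :: "nat \<Rightarrow> ereal" where
  "Gnorm n = ereal (Gopt P ge (\<lambda>i. M n * lam n i) / g (M n))"

lemma lam_nonneg: "0 \<le> lam n i"
  using lam_simplex by (simp add: prob_simplex_def)

lemma lam0_nonneg: "0 \<le> lam0 i"
  using lam0_simplex by (simp add: prob_simplex_def)

lemma alpha_nonneg: "0 \<le> \<alpha> e"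
proof -
  have "((\<lambda>n. ereal (ge e (M n * 1) / g (M n))) \<longlongrightarrow> \<alpha> e) sequentially"
    using scaled_lim[of 1 e] by simp
  moreover have "\<And>n. 0 \<le> ereal (ge e (M n * 1) / g (M n))"
    using ge_nonneg M_pos gM_pos by (simp add: less_imp_le)
  ultimately show ?thesis
    by (intro tendsto_lowerbound) (auto intro!: always_eventually)
qed

lemma limterm_nonneg: "0 \<le> limterm (\<alpha> e) z \<rho>"
  by (simp add: limterm_def alpha_nonneg)

lemma ncost_eq_sum: "ncost n y = (\<Sum>e\<in>UNIV. ereal (ge e (M n * zeta P y (lam n) e) / g (M n)))"
  by (simp add: ncost_def cost_def xflow_scale sum_divide_distrib)

lemma cost_nonneg: "y \<in> allocs P \<Longrightarrow> 0 \<le> cost P ge (\<lambda>i. M n * lam n i) y"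
  unfolding cost_def xflow_scale
  by (intro sum_nonneg ge_nonneg mult_nonneg_nonneg zeta_nonneg) (auto simp: less_imp_le M_pos lam_nonneg)

lemma Gnorm_le_ncost:
  assumes "y \<in> allocs P"
  shows "Gnorm n \<le> ncost n y"
proof -
  have "Gopt P ge (\<lambda>i. M n * lam n i) \<le> cost P ge (\<lambda>i. M n * lam n i) y"
    unfolding Gopt_def using assms cost_nonneg by (intro cINF_lower bdd_belowI[of _ 0]) auto
  then show ?thesis
    using gM_pos[of n] by (simp add: Gnorm_def ncost_def divide_right_mono)
qed

lemma Gnorm_eq_ncost_ybar: "Gnorm n = ncost n (ybar n)"
  by (simp add: Gnorm_def ncost_def ybar_opt)

definition avoids_infinite_edges :: "('i \<Rightarrow> 'e list \<Rightarrow> real) \<Rightarrow> bool" where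
  "avoids_infinite_edges y \<longleftrightarrow> (\<forall>e i. \<alpha> e = \<infinity> \<longrightarrow> zflow P y e i = 0)"

definition finite_path_of :: "'i \<Rightarrow> 'e list" where
  "finite_path_of i = (SOME p. p \<in> P i \<and> alpha_path \<alpha> p < \<infinity>)"

definition yfin :: "'i \<Rightarrow> 'e list \<Rightarrow> real" where
  "yfin i p = (if p = finite_path_of i then 1 else 0)"

lemma finite_path_of: "finite_path_of i \<in> P i" "alpha_path \<alpha> (finite_path_of i) < \<infinity>"
  using someI_ex[OF finite_path[of i, unfolded Bex_def]] by (simp_all add: finite_path_of_def)

lemma yfin_allocs: "yfin \<in> allocs P"
  using finite_path_of(1) P_fin by (auto simp: allocs_def prob_simplex_def yfin_def)

lemma avoids_infinite_edges_yfin: "avoids_infinite_edges yfin"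
  unfolding avoids_infinite_edges_def
proof (intro allI impI)
  fix e i
  assume "\<alpha> e = \<infinity>"
  then have "e \<notin> set (finite_path_of i)"
    using finite_path_of(2)[of i] alpha_le_alpha_path[of e _ \<alpha>] by force
  then show "zflow P yfin e i = 0"
    unfolding zflow_def yfin_def by (intro sum.neutral) auto
qed

lemma zeta_eq_0_if_avoids:
  "avoids_infinite_edges y \<Longrightarrow> \<alpha> e = \<infinity> \<Longrightarrow> zeta P y l e = 0"
  by (simp add: avoids_infinite_edges_def zeta_def)

lemma Vobj_finite_if_avoids:
  assumes "avoids_infinite_edges y"
  shows "Vobj P \<alpha> \<rho> lam0 y < \<infinity>"
proof -
  have "limterm (\<alpha> e) (zeta P y lam0 e) \<rho> \<noteq> \<infinity>" for e
    using zeta_eq_0_if_avoids[OF assms] alpha_nonneg[of e]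
    by (cases "\<alpha> e") (auto simp: limterm_def)
  then show ?thesis
    by (simp add: Vobj_def sum_Pinfty less_top)
qed

lemma Vrho_finite: "Vrho P \<alpha> \<rho> lam0 < \<infinity>"
proof -
  have "Vrho P \<alpha> \<rho> lam0 \<le> Vobj P \<alpha> \<rho> lam0 yfin"
    unfolding Vrho_def using yfin_allocs by (rule INF_lower)
  then show ?thesis
    using Vobj_finite_if_avoids[OF avoids_infinite_edges_yfin] by (rule order.strict_trans1)
qed

text \<open>Rerouting the OD pairs of zero limit demand onto finite paths leaves the limit
  objective unchanged, and a finite limit objective forbids the remaining pairs from
  using infinite edges.\<close>

lemma avoiding_alloc_exists:
  assumes y: "y \<in> allocs P" and Vobj_fin: "Vobj P \<alpha> \<rho> lam0 y < \<infinity>"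
  obtains y' where "y' \<in> allocs P" "avoids_infinite_edges y'"
    "Vobj P \<alpha> \<rho> lam0 y' = Vobj P \<alpha> \<rho> lam0 y"
proof
  define y' where "y' i = (if lam0 i = 0 then yfin i else y i)" for i
  show "y' \<in> allocs P"
    using y yfin_allocs by (auto simp: allocs_def y'_def)
  have zeta_eq: "zeta P y' lam0 e = zeta P y lam0 e" for e
    unfolding zeta_def zflow_def y'_def by (intro sum.cong) auto
  then show "Vobj P \<alpha> \<rho> lam0 y' = Vobj P \<alpha> \<rho> lam0 y"
    by (simp add: Vobj_def)
  show "avoids_infinite_edges y'"
    unfolding avoids_infinite_edges_def
  proof (intro allI impI)
    fix e i
    assume inf: "\<alpha> e = \<infinity>"
    have "zeta P y lam0 e = 0"
    proof (rule ccontr)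
      assume "zeta P y lam0 e \<noteq> 0"
      then have "limterm (\<alpha> e) (zeta P y lam0 e) \<rho> = \<infinity>"
        using inf by (simp add: limterm_def)
      then show False
        using Vobj_fin by (auto simp: Vobj_def sum_Pinfty)
    qed
    then have "lam0 i * zflow P y e i = 0"
      unfolding zeta_def
      by (subst (asm) sum_nonneg_eq_0_iff) (auto simp: lam0_nonneg zflow_nonneg[OF y])
    then show "zflow P y' e i = 0"
      using avoids_infinite_edges_yfin inf
      by (cases "lam0 i = 0") (auto simp: avoids_infinite_edges_def zflow_def y'_def)
  qed
qed

lemma limsup_ncost_le_Vobj:
  assumes y: "y \<in> allocs P" and avoids: "avoids_infinite_edges y"
  shows "limsup (\<lambda>n. ncost n y) \<le> Vobj P \<alpha> \<rho> lam0 y"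
proof -
  let ?t = "\<lambda>e n. ereal (ge e (M n * zeta P y (lam n) e) / g (M n))"
  have "limsup (?t e) \<le> limterm (\<alpha> e) (zeta P y lam0 e) \<rho>" for e
  proof (cases "\<alpha> e")
    case PInf
    then have "?t e = (\<lambda>n. 0)"
      using zeta_eq_0_if_avoids[OF avoids] by (simp add: ge_zero zero_ereal_def)
    then show ?thesis
      by (simp add: Limsup_const limterm_nonneg)
  next
    case (real r)
    have "limsup (?t e) \<le> ereal (r * zeta P y lam0 e powr \<rho>)"
    proof (rule limsup_scaled_le[where h = "ge e"])
      show "((\<lambda>n. ge e (M n * d) / g (M n)) \<longlongrightarrow> r * d powr \<rho>) sequentially" if "0 < d" for d
        using scaled_lim[OF that, of e] real by simp
      show "(\<lambda>n. zeta P y (lam n) e) \<longlonglongrightarrow> zeta P y lam0 e"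
        using lam_lim by (intro tendsto_zeta) auto
    qed (use y rho_pos M_pos gM_pos ge_mono in \<open>auto simp: zeta_nonneg lam_nonneg\<close>)
    then show ?thesis
      using real by (cases "zeta P y lam0 e = 0") (simp_all add: limterm_def zero_ereal_def)
  next
    case MInf
    then show ?thesis
      using alpha_nonneg[of e] by simp
  qed
  then have "(\<Sum>e\<in>UNIV. limsup (?t e)) \<le> Vobj P \<alpha> \<rho> lam0 y"
    unfolding Vobj_def by (rule sum_mono)
  then show ?thesis
    using limsup_sum_le[of UNIV ?t] by (simp add: ncost_eq_sum)
qed

lemma limsup_Gnorm_le_Vrho: "limsup Gnorm \<le> Vrho P \<alpha> \<rho> lam0"
  unfolding Vrho_def
proof (rule INF_greatest)
  fix y
  assume y: "y \<in> allocs P"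
  show "limsup Gnorm \<le> Vobj P \<alpha> \<rho> lam0 y"
  proof (cases "Vobj P \<alpha> \<rho> lam0 y < \<infinity>")
    case True
    then obtain y' where y': "y' \<in> allocs P" "avoids_infinite_edges y'"
      "Vobj P \<alpha> \<rho> lam0 y' = Vobj P \<alpha> \<rho> lam0 y"
      using avoiding_alloc_exists[OF y] by blast
    have "limsup Gnorm \<le> limsup (\<lambda>n. ncost n y')"
      using Gnorm_le_ncost[OF y'(1)] by (intro Limsup_mono always_eventually) auto
    also have "\<dots> \<le> Vobj P \<alpha> \<rho> lam0 y"
      using limsup_ncost_le_Vobj[OF y'(1,2)] y'(3) by simp
    finally show ?thesis .
  qed (simp add: top.not_eq_extremum)
qed


lemma Vobj_le_liminf_Gnorm_subseq:
  assumes \<phi>: "strict_mono \<phi>" and conv: "\<And>i p. (\<lambda>k. ybar (\<phi> k) i p) \<longlonglongrightarrow> y i p"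
  shows "Vobj P \<alpha> \<rho> lam0 y \<le> liminf (Gnorm \<circ> \<phi>)"
proof -
  let ?t = "\<lambda>e k. ereal (ge e (M (\<phi> k) * zeta P (ybar (\<phi> k)) (lam (\<phi> k)) e) / g (M (\<phi> k)))"
  have "limterm (\<alpha> e) (zeta P y lam0 e) \<rho> \<le> liminf (?t e)" for e
  proof (rule limterm_le_liminf_scaled[where N = "M \<circ> \<phi>" and h = "ge e", simplified])
    show "((\<lambda>k. ereal (ge e (M (\<phi> k) * d) / g (M (\<phi> k)))) \<longlongrightarrow> \<alpha> e * ereal (d powr \<rho>)) sequentially"
      if "0 < d" for d
      using LIMSEQ_subseq_LIMSEQ[OF scaled_lim[OF that] \<phi>] by (simp add: o_def)
    show "(\<lambda>k. zeta P (ybar (\<phi> k)) (lam (\<phi> k)) e) \<longlonglongrightarrow> zeta P y lam0 e"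
      using conv LIMSEQ_subseq_LIMSEQ[OF lam_lim \<phi>] by (intro tendsto_zeta) (auto simp: o_def)
  qed (use rho_pos M_pos gM_pos ge_mono ge_nonneg in
    \<open>auto simp: alpha_nonneg zeta_nonneg ybar_allocs lam_nonneg\<close>)
  then have "Vobj P \<alpha> \<rho> lam0 y \<le> (\<Sum>e\<in>UNIV. liminf (?t e))"
    unfolding Vobj_def by (rule sum_mono)
  also have "\<dots> \<le> liminf (\<lambda>k. \<Sum>e\<in>UNIV. ?t e k)"
    using M_pos gM_pos
    by (intro liminf_sum_ge)
      (auto intro!: divide_nonneg_nonneg ge_nonneg mult_nonneg_nonneg zeta_nonneg ybar_allocs
        simp: lam_nonneg less_imp_le)
  also have "\<dots> = liminf (Gnorm \<circ> \<phi>)"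
    by (simp add: o_def Gnorm_eq_ncost_ybar ncost_eq_sum)
  finally show ?thesis .
qed

text \<open>Compactness of the allocations: along a subsequence realizing \<open>liminf Gnorm\<close>,
  the optimal allocations have a limit point.\<close>

lemma Vrho_le_liminf_Gnorm: "Vrho P \<alpha> \<rho> lam0 \<le> liminf Gnorm"
proof -
  obtain r where r: "strict_mono r" "(Gnorm \<circ> r) \<longlonglongrightarrow> liminf Gnorm"
    using liminf_subseq_lim by blast
  obtain \<psi> y where \<psi>: "strict_mono \<psi>" and conv: "\<forall>i p. (\<lambda>k. ybar (r (\<psi> k)) i p) \<longlonglongrightarrow> y i p"
    using allocs_convergent_subseq[of P "\<lambda>k. ybar (r k)"] P_fin ybar_allocs by blast
  have "y \<in> allocs P"
    using conv by (intro allocs_closed[OF P_fin ybar_allocs]) auto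
  then have "Vrho P \<alpha> \<rho> lam0 \<le> Vobj P \<alpha> \<rho> lam0 y"
    unfolding Vrho_def by (rule INF_lower)
  also have "\<dots> \<le> liminf (Gnorm \<circ> (r \<circ> \<psi>))"
    using conv by (intro Vobj_le_liminf_Gnorm_subseq strict_mono_o r \<psi>) auto
  also have "\<dots> = liminf Gnorm"
    using LIMSEQ_subseq_LIMSEQ[OF r(2) \<psi>] by (simp add: lim_imp_Liminf o_assoc)
  finally show ?thesis .
qed

lemma Gnorm_tendsto_Vrho: "Gnorm \<longlonglongrightarrow> Vrho P \<alpha> \<rho> lam0"
proof -
  have "liminf Gnorm \<le> limsup Gnorm"
    by (rule Liminf_le_Limsup) simp
  then have "liminf Gnorm = Vrho P \<alpha> \<rho> lam0" "limsup Gnorm = Vrho P \<alpha> \<rho> lam0"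
    using Vrho_le_liminf_Gnorm limsup_Gnorm_le_Vrho by auto
  then show ?thesis
    by (intro Liminf_eq_Limsup) auto
qed

lemma limit_point_optimal:
  assumes r: "strict_mono r" and conv: "\<And>i p. (\<lambda>k. ybar (r k) i p) \<longlonglongrightarrow> y i p"
  shows "y \<in> allocs P" "Vobj P \<alpha> \<rho> lam0 y = Vrho P \<alpha> \<rho> lam0"
proof -
  show y: "y \<in> allocs P"
    using conv by (rule allocs_closed[OF P_fin ybar_allocs])
  have "Vobj P \<alpha> \<rho> lam0 y \<le> liminf (Gnorm \<circ> r)"
    using r conv by (rule Vobj_le_liminf_Gnorm_subseq)
  also have "\<dots> = Vrho P \<alpha> \<rho> lam0"
    using LIMSEQ_subseq_LIMSEQ[OF Gnorm_tendsto_Vrho r] by (simp add: lim_imp_Liminf)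
  finally show "Vobj P \<alpha> \<rho> lam0 y = Vrho P \<alpha> \<rho> lam0"
    using y by (intro antisym) (auto simp: Vrho_def intro: INF_lower)
qed

text \<open>Every allocation sends at least the share \<open>1 / |P i0|\<close> of the demand of \<open>i0\<close>
  along one path, and that path has an edge with \<open>\<alpha> e \<ge> alpha_od P \<alpha> i0\<close>.\<close>

lemma Vobj_lower_bound:
  assumes y: "y \<in> allocs P" and a0: "alpha_od P \<alpha> i0 = ereal a0" and lam0_pos: "0 < lam0 i0"
  shows "ereal (a0 * (lam0 i0 / card (P i0)) powr \<rho>) \<le> Vobj P \<alpha> \<rho> lam0 y"
proof -
  define w where "w = lam0 i0 / card (P i0)"
  have w_pos: "0 < w"
    using lam0_pos P_fin P_ne by (simp add: w_def card_gt_0_iff)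
  obtain p where p: "p \<in> P i0" "1 / card (P i0) \<le> y i0 p"
    using exists_path_share_ge_inverse_card[OF y P_fin P_ne] by blast
  obtain e where e: "e \<in> set p" "\<alpha> e = alpha_path \<alpha> p"
    using alpha_path_attained[OF path_ne[OF p(1)]] by blast
  have "alpha_od P \<alpha> i0 \<le> alpha_path \<alpha> p"
    unfolding alpha_od_def using p(1) P_fin by (intro Min_le) auto
  then have a0_le: "ereal a0 \<le> \<alpha> e"
    using e(2) a0 by simp
  have "w = lam0 i0 * (1 / card (P i0))"
    by (simp add: w_def)
  also have "\<dots> \<le> lam0 i0 * y i0 p"
    using p(2) lam0_pos by (intro mult_left_mono) auto
  also have "\<dots> \<le> lam0 i0 * zflow P y e i0"
    unfolding zflow_def using p e(1) P_fin lam0_pos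
    by (intro mult_left_mono member_le_sum) (auto simp: allocs_nonneg[OF y])
  also have "\<dots> \<le> zeta P y lam0 e"
    unfolding zeta_def by (intro member_le_sum) (auto simp: lam0_nonneg zflow_nonneg[OF y])
  finally have w_le: "w \<le> zeta P y lam0 e" .
  have "ereal (a0 * w powr \<rho>) \<le> \<alpha> e * ereal (zeta P y lam0 e powr \<rho>)"
  proof (cases "\<alpha> e")
    case (real a)
    then show ?thesis
      using a0_le w_le w_pos rho_pos alpha_nonneg[of e]
      by (auto intro!: mult_mono powr_mono2)
  qed (use a0_le w_le w_pos in auto)
  also have "\<dots> = limterm (\<alpha> e) (zeta P y lam0 e) \<rho>"
    using w_le w_pos by (simp add: limterm_def)
  also have "\<dots> \<le> Vobj P \<alpha> \<rho> lam0 y"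
    unfolding Vobj_def using sum_mono2[of UNIV "{e}" "\<lambda>e. limterm (\<alpha> e) (zeta P y lam0 e) \<rho>"]
    by (simp add: limterm_nonneg)
  finally show ?thesis
    by (simp add: w_def)
qed

lemma Vrho_pos:
  assumes "0 < alpha_od P \<alpha> i0" "alpha_od P \<alpha> i0 < \<infinity>" "0 < lam0 i0"
  shows "0 < Vrho P \<alpha> \<rho> lam0"
proof -
  obtain a0 where a0: "alpha_od P \<alpha> i0 = ereal a0" "0 < a0"
    using assms(1,2) by (cases "alpha_od P \<alpha> i0") auto
  have "ereal (a0 * (lam0 i0 / card (P i0)) powr \<rho>) \<le> Vrho P \<alpha> \<rho> lam0"
    unfolding Vrho_def using Vobj_lower_bound[OF _ a0(1) assms(3)] by (rule INF_greatest)
  moreover have "0 < a0 * (lam0 i0 / card (P i0)) powr \<rho>"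
    using a0(2) assms(3) P_fin P_ne by (simp add: card_gt_0_iff)
  ultimately show ?thesis
    by (meson ereal_less(2) order_less_le_trans)
qed

end

theorem lemmaB3:
  fixes \<omega> :: ereal
    and tail head :: "'e::finite \<Rightarrow> 'v"
    and orig dest :: "'i::finite \<Rightarrow> 'v"
    and P :: "'i \<Rightarrow> 'e list set"
    and ge :: "'e \<Rightarrow> real \<Rightarrow> real"
    and g :: "real \<Rightarrow> real"
    and \<rho> :: real
    and \<alpha> :: "'e \<Rightarrow> ereal"
    and M :: "nat \<Rightarrow> real"
    and lam :: "nat \<Rightarrow> 'i \<Rightarrow> real"
    and lam0 :: "'i \<Rightarrow> real"
    and ybar :: "nat \<Rightarrow> 'i \<Rightarrow> 'e list \<Rightarrow> real"
  assumes omega: "\<omega> = 0 \<or> \<omega> = \<infinity>"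
    and P_fin: "\<forall>i. finite (P i)"
    and P_ne: "\<forall>i. P i \<noteq> {}"
    and P_disj: "\<forall>i j. i \<noteq> j \<longrightarrow> P i \<inter> P j = {}"
    and P_paths: "\<forall>i. \<forall>p\<in>P i. is_path tail head (orig i) (dest i) p"
    and ge_mono: "\<forall>e. mono_on {0..} (ge e)"
    and ge_nonneg: "\<forall>e. \<forall>x\<ge>0. 0 \<le> ge e x"
    and ge_zero: "\<forall>e. ge e 0 = 0"
    and g_pos: "\<forall>x>0. 0 < g x"
    and rho_pos: "0 < \<rho>"
    and g_regvar: "\<forall>x>0. ((\<lambda>t. g (t * x) / g t) \<longlongrightarrow> x powr \<rho>) (omega_filter \<omega>)"
    and alpha_lim: "\<forall>e. ((\<lambda>x. ereal (ge e x / g x)) \<longlongrightarrow> \<alpha> e) (omega_filter \<omega>)"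
    and M_pos: "\<forall>n. 0 < M n"
    and lam_simplex: "\<forall>n. lam n \<in> prob_simplex UNIV"
    and M_lim: "filterlim M (omega_filter \<omega>) sequentially"
    and lam_lim: "\<forall>i. ((\<lambda>n. lam n i) \<longlongrightarrow> lam0 i) sequentially"
    and lam0_simplex: "lam0 \<in> prob_simplex UNIV"
    and finite_path: "\<forall>i. \<exists>p\<in>P i. alpha_path \<alpha> p < \<infinity>"
    and nondeg: "\<exists>i. 0 < alpha_od P \<alpha> i \<and> alpha_od P \<alpha> i < \<infinity> \<and> 0 < lam0 i"
    and ybar_opt: "\<forall>n. ybar n \<in> allocs P \<and>
                     cost P ge (\<lambda>i. M n * lam n i) (ybar n) = Gopt P ge (\<lambda>i. M n * lam n i)"
  shows "0 < Vrho P \<alpha> \<rho> lam0 \<and> Vrho P \<alpha> \<rho> lam0 < \<infinity>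
    \<and> ((\<lambda>n. ereal (Gopt P ge (\<lambda>i. M n * lam n i) / g (M n))) \<longlongrightarrow> Vrho P \<alpha> \<rho> lam0) sequentially
    \<and> (\<forall>y r. strict_mono r \<and> (\<forall>i p. ((\<lambda>k. ybar (r k) i p) \<longlongrightarrow> y i p) sequentially)
          \<longrightarrow> y \<in> allocs P \<and> Vobj P \<alpha> \<rho> lam0 y = Vrho P \<alpha> \<rho> lam0)"
proof -
  interpret asymptotic_routing P ge g \<rho> \<alpha> M lam lam0 ybar
  proof
    show "p \<noteq> []" if "p \<in> P i" for i p
      using P_paths that by (auto simp: is_path_def)
    show "((\<lambda>n. ereal (ge e (M n * d) / g (M n))) \<longlongrightarrow> \<alpha> e * ereal (d powr \<rho>)) sequentially"
      if "0 < d" for e d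
      using scaled_ratio_tendsto[OF omega M_lim _ _ g_regvar[rule_format, OF that]
          alpha_lim[rule_format] that] M_pos g_pos
      by auto
  qed (use assms in auto)
  show ?thesis
    using Vrho_pos Vrho_finite Gnorm_tendsto_Vrho limit_point_optimal nondeg
    unfolding Gnorm_def by blast
qed

end
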